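(* Let $h(z)=\sum_{j=0}^\infty h_jz^j$ be a fixed function analytic in the unit disc $D$ with $0<|h_j|\le M$ for all $j$. Let $f(z)=\sum_{j=0}^\infty f_jz^j$ be such that $F(z):=\sum_{j=0}^\infty\frac{f_j}{h_j}z^j$ is bounded and analytic in $D$. Then there exists an integer $n_1$ such that for every $n\ge n_1$, with $N=2n+1$, there exist pairwise distinct numbers $\lambda_1,\dots,\lambda_N$ with $|\lambda_k|=1$ such that \[|H_N(\lambda;z)-f(z)|\le|z|^n\frac{(5-|z|)^{n+1}}{4^{n-1}}\cdot\frac{2M}{3}\cdot\frac{3+|z|}{(1-|z|)^4},\qquad |z|<1,\] where $H_N(\lambda;z)=\sum_{k=1}^N\lambda_kh(\lambda_kz)$.
   Context: In the paper the threshold is written $n\ge n_1(-F)$, where $n_1(g)$ denotes an integer (depending on $g$) for which the following holds for all $n\ge n_1(g)$: writing $g=\sum(-a_j)z^j$, the roots of $P_n(g;z):=s_n(z)+z^{2n+1}\overline{s}_n(1/z)$ ($s_n$ the $n$-th Taylor polynomial of $\exp\int_0^z g$, $\overline{s}_n$ its coefficient-conjugate) are simple, lie on $|z|=1$, and their reciprocals $\lambda_k$ satisfy $\sum_k\lambda_k^{j+1}=a_j$ for $j<n$ and $|\sum_k\lambda_k^{j+1}-a_j|<r^{n+1}(r-\varepsilon)^{-j}/(2\varepsilon(1-r))$ for $j\ge n$, $0<\varepsilon<r<1$. *)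

theory Defs
  imports "HOL-Analysis.Analysis"
begin

definition pser :: "(nat \<Rightarrow> complex) \<Rightarrow> complex \<Rightarrow> complex" where
  "pser c z = (\<Sum>j. c j * z ^ j)"

definition HN :: "(nat \<Rightarrow> complex) \<Rightarrow> nat \<Rightarrow> (nat \<Rightarrow> complex) \<Rightarrow> complex \<Rightarrow> complex" where
  "HN hc N lam z = (\<Sum>k=1..N. lam k * pser hc (lam k * z))"

end

theory Submission
  imports Defs "HOL-Complex_Analysis.Complex_Analysis"
begin

(* Put a_j = f_j / h_j, so that F = sum a_j z^j is bounded by some B on the disc; a bounded
   power series has |a_j| <= B by Bessel's inequality. The function G = exp (- integral F) satisfies
   G' = - F G and exp (-B) <= |G| <= exp B; since G' is bounded, Bessel's inequality gives
   sum (j+1)^2 |g_(j+1)|^2 < oo, so the Taylor coefficients g_j of G are absolutely summable and for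
   large n the partial sum s_n of G has no zeros on the closed disc.
   A continuous logarithm of s_n on the disc shows that z^N conj (s_n z) / s_n z (N = 2n+1) winds N
   times around the circle, so for a suitable unimodular u the self-inversive polynomial
   s_n(z) + u z^N conj(s_n)(1/z) has N distinct zeros 1/lambda_k on the unit circle; as it has
   constant term 1, it equals prod (1 - lambda_k z) and agrees with G up to degree n.
   Comparing the logarithmic derivatives of the two (Newton's identities) yields
   sum_k lambda_k^(j+1) = a_j for j < n. Hence H_N - f = sum_j h_j (sum_k lambda_k^(j+1) - a_j) z^j
   vanishes to order n and has coefficients bounded by M (N + B), which is dominated by the stated
   majorant once n is large compared with B. *)

section \<open>Bessel's inequality for bounded power series\<close>

lemma cis_ne_1_if_not_multiple:
  fixes d :: int
  assumes "d \<noteq> 0" "\<bar>d\<bar> < int K"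
  shows "cis (2 * pi * of_int d / K) \<noteq> 1"
proof
  assume "cis (2 * pi * of_int d / K) = 1"
  then have "cos (2 * pi * of_int d / K) = 1"
    by (simp add: complex_eq_iff)
  then obtain m :: int where "2 * pi * of_int d / K = of_int m * 2 * pi"
    unfolding cos_one_2pi_int by blast
  then have "2 * pi * (of_int d / K) = 2 * pi * of_int m"
    by (simp add: ac_simps)
  then have "real_of_int d / K = real_of_int m"
    by (simp only: mult_cancel_left) simp
  moreover have "0 < K"
    using abs_ge_zero[of d] assms(2) by linarith
  ultimately have "real_of_int d = real_of_int (m * int K)"
    by (simp add: field_simps)
  then have "d = m * int K"
    by (simp only: of_int_eq_iff)
  then have "\<bar>m\<bar> * int K < 1 * int K"
    using assms(2) by (simp add: abs_mult)
  then have "m = 0"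
    by (simp only: mult_less_cancel_right) simp
  with \<open>d = m * int K\<close> assms(1) show False
    by simp
qed

lemma sum_roots_of_unity_orthogonal:
  fixes j l K :: nat
  assumes "j < K" "l < K"
  shows "(\<Sum>t<K. (cis (2 * pi / K) ^ j * cnj (cis (2 * pi / K)) ^ l) ^ t)
           = (if j = l then of_nat K else 0)"
proof -
  define z where "z = cis (2 * pi / K) ^ j * cnj (cis (2 * pi / K)) ^ l"
  have z: "z = cis (2 * pi * of_int (int j - int l) / K)"
    unfolding z_def cis_cnj Complex.DeMoivre cis_mult by (simp add: diff_divide_distrib algebra_simps)
  have "(\<Sum>t<K. z ^ t) = (if j = l then of_nat K else 0)"
  proof (cases "j = l")
    case True
    then show ?thesis
      by (simp add: z)
  next
    case False
    have "z ^ K = 1"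
      using assms by (simp add: z Complex.DeMoivre)
    moreover have "z \<noteq> 1"
      unfolding z using False assms by (intro cis_ne_1_if_not_multiple) auto
    ultimately show ?thesis
      using False by (simp add: sum_gp_strict)
  qed
  then show ?thesis
    unfolding z_def .
qed

lemma discrete_parseval:
  fixes c :: "nat \<Rightarrow> complex"
  shows "(\<Sum>t<K. (norm (\<Sum>j<K. c j * (cis (2 * pi / K) ^ t) ^ j))\<^sup>2)
           = real K * (\<Sum>j<K. (norm (c j))\<^sup>2)"
proof -
  define \<omega> where "\<omega> = cis (2 * pi / K)"
  have "complex_of_real (\<Sum>t<K. (norm (\<Sum>j<K. c j * (\<omega> ^ t) ^ j))\<^sup>2)
      = (\<Sum>t<K. (\<Sum>j<K. c j * (\<omega> ^ t) ^ j) * cnj (\<Sum>j<K. c j * (\<omega> ^ t) ^ j))"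
    by (simp only: of_real_sum complex_norm_square)
  also have "\<dots> = (\<Sum>t<K. \<Sum>j<K. \<Sum>l<K. (c j * cnj (c l)) * (\<omega> ^ j * cnj \<omega> ^ l) ^ t)"
    by (intro sum.cong refl)
       (simp add: cnj_sum sum_product power_mult_distrib power_mult[symmetric] mult.commute
          mult.left_commute, intro sum.cong refl, simp only: mult_ac)
  also have "\<dots> = (\<Sum>j<K. \<Sum>l<K. \<Sum>t<K. (c j * cnj (c l)) * (\<omega> ^ j * cnj \<omega> ^ l) ^ t)"
    by (subst sum.swap) (intro sum.cong refl sum.swap)
  also have "\<dots> = (\<Sum>j<K. \<Sum>l<K. (c j * cnj (c l)) * (\<Sum>t<K. (\<omega> ^ j * cnj \<omega> ^ l) ^ t))"
    by (simp only: sum_distrib_left)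
  also have "\<dots> = (\<Sum>j<K. \<Sum>l<K. (c j * cnj (c l)) * (if j = l then of_nat K else 0))"
    by (intro sum.cong refl) (simp add: \<omega>_def sum_roots_of_unity_orthogonal)
  also have "\<dots> = (\<Sum>j<K. (c j * cnj (c j)) * of_nat K)"
    by (simp add: if_distrib cong: if_cong)
  also have "\<dots> = complex_of_real (real K * (\<Sum>j<K. (norm (c j))\<^sup>2))"
    by (simp add: complex_norm_square[symmetric] sum_distrib_left mult.commute)
  finally show ?thesis
    unfolding \<omega>_def of_real_eq_iff .
qed

lemma norm_sums_minus_partial_sum_le:
  fixes f :: "nat \<Rightarrow> 'a::banach"
  assumes "f sums S" "summable (\<lambda>j. norm (f j))"
  shows "norm (S - (\<Sum>j<K. f j)) \<le> (\<Sum>i. norm (f (i + K)))"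
proof -
  have "(\<lambda>i. f (i + K)) sums (S - (\<Sum>j<K. f j))"
    by (rule sums_split_initial_segment[OF assms(1)])
  moreover have "summable (\<lambda>i. norm (f (i + K)))"
    using assms(2) by (rule summable_iff_shift[THEN iffD2])
  ultimately show ?thesis
    using summable_norm[of "\<lambda>i. f (i + K)"] by (simp add: sums_iff)
qed

lemma bessel_ineq_power_series_truncated:
  fixes d :: "nat \<Rightarrow> complex"
  assumes sums: "\<And>w. norm w < 1 \<Longrightarrow> (\<lambda>j. d j * w ^ j) sums D w"
    and bound: "\<And>w. norm w < 1 \<Longrightarrow> norm (D w) \<le> C"
    and r: "0 \<le> r" "r < 1" and abs_summable: "summable (\<lambda>j. norm (d j) * r ^ j)"
    and K: "J \<le> K" "0 < K"
  shows "(\<Sum>j<J. (norm (d j))\<^sup>2 * r ^ (2 * j)) \<le> (C + (\<Sum>i. norm (d (i + K)) * r ^ (i + K)))\<^sup>2"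
proof -
  define tail where "tail = (\<Sum>i. norm (d (i + K)) * r ^ (i + K))"
  define \<omega> where "\<omega> = cis (2 * pi / K)"
  have "0 \<le> tail"
    unfolding tail_def using summable_iff_shift[THEN iffD2, OF abs_summable] r
    by (intro suminf_nonneg) auto
  have sample: "norm (\<Sum>j<K. (d j * r ^ j) * (\<omega> ^ t) ^ j) \<le> C + tail" for t
  proof -
    define z where "z = complex_of_real r * \<omega> ^ t"
    have norm_z: "norm z = r"
      using r by (simp add: z_def \<omega>_def norm_mult norm_power)
    have terms: "norm (d j * z ^ j) = norm (d j) * r ^ j" for j
      by (simp add: norm_mult norm_power norm_z)
    have "norm (D z - (\<Sum>j<K. d j * z ^ j)) \<le> tail"
      using norm_sums_minus_partial_sum_le[OF sums, of z K] abs_summable norm_z r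
      by (simp add: terms tail_def)
    moreover have "norm (D z) \<le> C"
      using bound norm_z r by simp
    moreover have "(\<Sum>j<K. (d j * r ^ j) * (\<omega> ^ t) ^ j) = (\<Sum>j<K. d j * z ^ j)"
      by (simp add: z_def power_mult_distrib mult_ac)
    ultimately show ?thesis
      using norm_triangle_ineq4[of "D z" "D z - (\<Sum>j<K. d j * z ^ j)"] by simp
  qed
  have "(\<Sum>j<J. (norm (d j))\<^sup>2 * r ^ (2 * j)) \<le> (\<Sum>j<K. (norm (d j))\<^sup>2 * r ^ (2 * j))"
    using K by (intro sum_mono2) auto
  also have "\<dots> = (\<Sum>j<K. (norm (d j * r ^ j))\<^sup>2)"
    using r by (simp add: norm_mult norm_power power_mult_distrib power_mult mult_ac)
  also have "\<dots> = (\<Sum>t<K. (norm (\<Sum>j<K. (d j * r ^ j) * (\<omega> ^ t) ^ j))\<^sup>2) / K"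
    using discrete_parseval[of "\<lambda>j. d j * r ^ j" K] K by (simp add: \<omega>_def)
  also have "\<dots> \<le> (\<Sum>t<K. (C + tail)\<^sup>2) / K"
    using sample bound[of 0] \<open>0 \<le> tail\<close>
    by (intro divide_right_mono sum_mono power_mono) (auto intro: order_trans[OF norm_ge_zero])
  also have "\<dots> = (C + tail)\<^sup>2"
    using K by simp
  finally show ?thesis
    unfolding tail_def .
qed

lemma bessel_ineq_power_series_radius:
  fixes d :: "nat \<Rightarrow> complex"
  assumes sums: "\<And>w. norm w < 1 \<Longrightarrow> (\<lambda>j. d j * w ^ j) sums D w"
    and bound: "\<And>w. norm w < 1 \<Longrightarrow> norm (D w) \<le> C"
    and r: "0 \<le> r" "r < 1"
  shows "(\<Sum>j<J. (norm (d j))\<^sup>2 * r ^ (2 * j)) \<le> C\<^sup>2"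
proof -
  have "norm (complex_of_real ((1 + r) / 2)) < 1" "norm (complex_of_real r) < norm (complex_of_real ((1 + r) / 2))"
    using r by (simp_all only: norm_of_real) auto
  then have "summable (\<lambda>j. norm (d j * complex_of_real r ^ j))"
    by (intro powser_insidea[OF sums_summable[OF sums]])
  then have abs_summable: "summable (\<lambda>j. norm (d j) * r ^ j)"
    using r by (simp add: norm_mult norm_power)
  have "(\<lambda>K. (C + (\<Sum>i. norm (d (i + K)) * r ^ (i + K)))\<^sup>2) \<longlonglongrightarrow> (C + 0)\<^sup>2"
    by (intro tendsto_intros suminf_exist_split2 abs_summable)
  moreover have "eventually (\<lambda>K. (\<Sum>j<J. (norm (d j))\<^sup>2 * r ^ (2 * j))
      \<le> (C + (\<Sum>i. norm (d (i + K)) * r ^ (i + K)))\<^sup>2) sequentially"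
    using eventually_ge_at_top[of "Suc J"]
    by eventually_elim (rule bessel_ineq_power_series_truncated[OF sums bound r abs_summable], auto)
  ultimately show ?thesis
    by (intro tendsto_le[OF trivial_limit_sequentially _ tendsto_const]) auto
qed

lemma bessel_ineq_power_series:
  fixes d :: "nat \<Rightarrow> complex"
  assumes "\<And>w. norm w < 1 \<Longrightarrow> (\<lambda>j. d j * w ^ j) sums D w"
    and "\<And>w. norm w < 1 \<Longrightarrow> norm (D w) \<le> C"
  shows "(\<Sum>j<J. (norm (d j))\<^sup>2) \<le> C\<^sup>2"
proof -
  have "((\<lambda>r. \<Sum>j<J. (norm (d j))\<^sup>2 * r ^ (2 * j)) \<longlongrightarrow> (\<Sum>j<J. (norm (d j))\<^sup>2 * 1 ^ (2 * j)))
          (at_left (1::real))"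
    by (intro tendsto_intros)
  moreover have "eventually (\<lambda>r. (\<Sum>j<J. (norm (d j))\<^sup>2 * r ^ (2 * j)) \<le> C\<^sup>2) (at_left (1::real))"
    using eventually_at_left_real[of 0 "1::real", OF zero_less_one]
    by eventually_elim (rule bessel_ineq_power_series_radius[OF assms], auto)
  ultimately show ?thesis
    by (intro tendsto_le[OF trivial_limit_at_left_real tendsto_const]) auto
qed

lemma norm_power_series_coeff_le:
  fixes d :: "nat \<Rightarrow> complex"
  assumes "\<And>w. norm w < 1 \<Longrightarrow> (\<lambda>j. d j * w ^ j) sums D w"
    and "\<And>w. norm w < 1 \<Longrightarrow> norm (D w) \<le> C"
  shows "norm (d j) \<le> C"
proof -
  have "(norm (d j))\<^sup>2 \<le> (\<Sum>i<Suc j. (norm (d i))\<^sup>2)"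
    by (rule member_le_sum) auto
  also have "\<dots> \<le> C\<^sup>2"
    by (rule bessel_ineq_power_series[OF assms])
  finally have "(norm (d j))\<^sup>2 \<le> C\<^sup>2" .
  moreover have "0 \<le> C"
    using order_trans[OF norm_ge_zero assms(2)[of 0]] by simp
  ultimately show ?thesis
    by (rule power2_le_imp_le)
qed

section \<open>Taylor series of the exponential of a primitive\<close>

lemma summable_norm_if_summable_weighted_square:
  fixes c :: "nat \<Rightarrow> 'a::real_normed_vector"
  assumes "summable (\<lambda>j. (real (Suc j) * norm (c (Suc j)))\<^sup>2)"
  shows "summable (\<lambda>j. norm (c j))"
proof -
  have amgm: "norm (norm (c (Suc j)))
      \<le> ((real (Suc j) * norm (c (Suc j)))\<^sup>2 + inverse (real (Suc j) ^ 2)) / 2" for j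
  proof -
    define x where "x = real (Suc j) * norm (c (Suc j))"
    define y where "y = inverse (real (Suc j))"
    have "norm (norm (c (Suc j))) = x * y"
      by (simp add: x_def y_def)
    also have "\<dots> \<le> (x\<^sup>2 + y\<^sup>2) / 2"
      using sum_squares_bound[of x y] by simp
    also have "\<dots> = ((real (Suc j) * norm (c (Suc j)))\<^sup>2 + inverse (real (Suc j) ^ 2)) / 2"
      by (simp add: x_def y_def power_inverse)
    finally show ?thesis .
  qed
  have "summable (\<lambda>j. inverse (real (Suc j) ^ 2))"
    using inverse_power_summable[of 2, where 'a=real] summable_Suc_iff[of "\<lambda>n. inverse (real n ^ 2)"]
    by simp
  then have "summable (\<lambda>j. norm (c (Suc j)))"
    by (rule summable_comparison_test'[OF summable_divide[OF summable_add[OF assms]] amgm])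
  then show ?thesis
    by (rule summable_Suc_iff[THEN iffD1])
qed

lemma summable_norm_fps_expansion_if_deriv_bounded:
  fixes G :: "complex \<Rightarrow> complex"
  assumes "G holomorphic_on ball 0 1" and "\<And>w. norm w < 1 \<Longrightarrow> norm (deriv G w) \<le> C"
  shows "summable (\<lambda>k. norm (fps_expansion G 0 $ k))"
proof -
  define g where "g = fps_expansion G 0"
  have "G has_fps_expansion g"
    unfolding g_def by (rule has_fps_expansion_fps_expansion[OF open_ball _ assms(1)]) simp
  then have "deriv G has_fps_expansion fps_deriv g"
    by (rule has_fps_expansion_deriv)
  moreover have "deriv G holomorphic_on eball 0 1"
    using holomorphic_deriv[OF assms(1) open_ball] by (simp add: one_ereal_def)
  ultimately have "(\<lambda>j. fps_deriv g $ j * w ^ j) sums deriv G w" if "norm w < 1" for w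
    by (rule has_fps_expansion_imp_sums_complex) (use that in \<open>simp add: one_ereal_def\<close>)
  then have "(\<Sum>j<J. (norm (fps_deriv g $ j))\<^sup>2) \<le> C\<^sup>2" for J
    using assms(2) by (rule bessel_ineq_power_series)
  moreover have "norm (fps_deriv g $ j) = real (Suc j) * norm (g $ Suc j)" for j
    by (simp only: fps_deriv_nth norm_mult norm_of_nat Suc_eq_plus1)
  ultimately have "summable (\<lambda>j. (real (Suc j) * norm (g $ Suc j))\<^sup>2)"
    by (intro summableI_nonneg_bounded[of _ "C\<^sup>2"]) simp_all
  then show ?thesis
    unfolding g_def by (rule summable_norm_if_summable_weighted_square)
qed

lemma exists_bounded_primitive:
  fixes F :: "complex \<Rightarrow> complex"
  assumes holo: "F holomorphic_on ball 0 1" and bound: "\<And>w. norm w < 1 \<Longrightarrow> norm (F w) \<le> B"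
  obtains I where "I 0 = 0" "\<And>x. x \<in> ball 0 1 \<Longrightarrow> (I has_field_derivative F x) (at x)"
    "\<And>w. norm w < 1 \<Longrightarrow> norm (I w) \<le> B"
proof -
  obtain I0 where I0: "\<And>x. x \<in> ball 0 1 \<Longrightarrow> (I0 has_field_derivative F x) (at x within ball 0 1)"
    using holomorphic_convex_primitive'[OF convex_ball open_ball holo] by blast
  define I where "I w = I0 w - I0 0" for w
  have I: "(I has_field_derivative F x) (at x)" if "x \<in> ball 0 1" for x
  proof -
    have "(I0 has_field_derivative F x) (at x)"
      using I0[OF that] at_within_open[OF that open_ball] by simp
    then show ?thesis
      unfolding I_def by (auto intro!: derivative_eq_intros)
  qed
  have "norm (I w) \<le> B" if "norm w < 1" for w
  proof -
    have "norm (I w - I 0) \<le> B * norm (w - 0)"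
      by (rule field_differentiable_bound[OF convex_ball[of 0 1], where f = I and f' = F])
         (use I bound that in \<open>auto simp: has_field_derivative_at_within\<close>)
    also have "\<dots> \<le> B"
      using that order_trans[OF norm_ge_zero bound[of 0]] by (simp add: mult_left_le)
    finally show ?thesis
      by (simp add: I_def)
  qed
  then show ?thesis
    using I by (intro that[of I]) (simp_all add: I_def)
qed

lemma exists_exp_neg_primitive:
  fixes F :: "complex \<Rightarrow> complex"
  assumes holo: "F holomorphic_on ball 0 1" and bound: "\<And>w. norm w < 1 \<Longrightarrow> norm (F w) \<le> B"
  obtains G where "G holomorphic_on ball 0 1" "G 0 = 1"
    "\<And>w. norm w < 1 \<Longrightarrow> deriv G w = - (F w * G w)"
    "\<And>w. norm w < 1 \<Longrightarrow> exp (- B) \<le> norm (G w) \<and> norm (G w) \<le> exp B"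
proof -
  obtain I where I: "I 0 = 0" "\<And>x. x \<in> ball 0 1 \<Longrightarrow> (I has_field_derivative F x) (at x)"
    and I_bound: "\<And>w. norm w < 1 \<Longrightarrow> norm (I w) \<le> B"
    using exists_bounded_primitive[OF holo bound] by blast
  define G where "G w = exp (- I w)" for w
  have G: "(G has_field_derivative - (F x * G x)) (at x)" if "x \<in> ball 0 1" for x
    unfolding G_def using I(2)[OF that] by (auto intro!: derivative_eq_intros)
  show ?thesis
  proof
    show "G holomorphic_on ball 0 1"
      using G holomorphic_on_open[OF open_ball] by blast
    show "G 0 = 1"
      by (simp add: G_def I(1))
    show "deriv G w = - (F w * G w)" if "norm w < 1" for w
      using G[of w] that by (simp add: DERIV_imp_deriv)
    show "exp (- B) \<le> norm (G w) \<and> norm (G w) \<le> exp B" if "norm w < 1" for w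
    proof -
      have "\<bar>Re (I w)\<bar> \<le> B"
        using I_bound[OF that] abs_Re_le_cmod[of "I w"] by linarith
      then show ?thesis
        unfolding G_def norm_exp_eq_Re by (auto simp: abs_le_iff)
    qed
  qed
qed

lemma has_fps_expansion_if_sums:
  fixes a :: "nat \<Rightarrow> complex"
  assumes "0 < r" and "\<And>w. norm w < r \<Longrightarrow> (\<lambda>j. a j * w ^ j) sums F w"
  shows "F has_fps_expansion Abs_fps a"
proof (rule has_fps_expansionI)
  show "eventually (\<lambda>w. (\<lambda>j. Abs_fps a $ j * w ^ j) sums F w) (nhds 0)"
  proof -
    have "eventually (\<lambda>w. w \<in> ball 0 r) (nhds 0)"
      using assms(1) by (intro eventually_nhds_in_open) auto
    then show ?thesis
      by eventually_elim (simp add: assms(2))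
  qed
qed

lemma fps_deriv_fps_expansion_linear_ode:
  fixes F G :: "complex \<Rightarrow> complex"
  assumes "open S" "0 \<in> S" "G holomorphic_on S" "F has_fps_expansion A"
    and ode: "\<And>x. x \<in> S \<Longrightarrow> deriv G x = - (F x * G x)"
  shows "fps_deriv (fps_expansion G 0) = - (A * fps_expansion G 0)"
proof -
  have G: "G has_fps_expansion fps_expansion G 0"
    by (rule has_fps_expansion_fps_expansion[OF assms(1-3)])
  have "eventually (\<lambda>x. - (F x * G x) = deriv G x) (nhds 0)"
    using eventually_nhds_in_open[OF assms(1,2)] by eventually_elim (simp add: ode)
  then have "deriv G has_fps_expansion - (A * fps_expansion G 0)"
    using has_fps_expansion_minus[OF has_fps_expansion_mult[OF assms(4) G]]
    by (subst (asm) has_fps_expansion_cong) auto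
  moreover have "deriv G has_fps_expansion fps_deriv (fps_expansion G 0)"
    by (rule has_fps_expansion_deriv[OF G])
  ultimately show ?thesis
    by (rule fps_expansion_unique_complex[rotated])
qed

lemma norm_power_series_minus_partial_sum_le:
  fixes c :: "nat \<Rightarrow> complex"
  assumes summable: "summable (\<lambda>k. norm (c k))" and "(\<lambda>k. c k * w ^ k) sums S" and "norm w \<le> 1"
  shows "norm (S - (\<Sum>k<K. c k * w ^ k)) \<le> (\<Sum>i. norm (c (i + K)))"
proof -
  have term_le: "norm (c k * w ^ k) \<le> norm (c k)" for k
    using assms(3) by (simp add: norm_mult norm_power mult_left_le power_le_one)
  have tail_summable: "summable (\<lambda>i. norm (c (i + K)))"
    using summable by (rule summable_iff_shift[THEN iffD2])
  have "summable (\<lambda>k. norm (c k * w ^ k))"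
    by (intro summable_comparison_test'[OF summable]) (simp add: term_le)
  then have "norm (S - (\<Sum>k<K. c k * w ^ k)) \<le> (\<Sum>i. norm (c (i + K) * w ^ (i + K)))"
    by (rule norm_sums_minus_partial_sum_le[OF assms(2)])
  also have "\<dots> \<le> (\<Sum>i. norm (c (i + K)))"
  proof (rule suminf_le)
    show "summable (\<lambda>i. norm (c (i + K) * w ^ (i + K)))"
      by (rule summable_comparison_test'[OF tail_summable]) (simp add: term_le)
  qed (use term_le tail_summable in auto)
  finally show ?thesis .
qed

lemma eventually_partial_sums_nonzero_on_cball:
  fixes c :: "nat \<Rightarrow> complex"
  assumes summable: "summable (\<lambda>k. norm (c k))"
    and sums: "\<And>w. norm w < 1 \<Longrightarrow> (\<lambda>k. c k * w ^ k) sums G w"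
    and lower: "\<And>w. norm w < 1 \<Longrightarrow> \<delta> \<le> norm (G w)" and "0 < \<delta>"
  shows "eventually (\<lambda>n. \<forall>w. norm w \<le> 1 \<longrightarrow> (\<Sum>k\<le>n. c k * w ^ k) \<noteq> 0) sequentially"
proof -
  have "eventually (\<lambda>n. (\<Sum>i. norm (c (i + n))) < \<delta> / 2) sequentially"
    by (rule order_tendstoD(2)[OF suminf_exist_split2[OF summable]]) (use \<open>0 < \<delta>\<close> in simp)
  then have "eventually (\<lambda>n. (\<Sum>i. norm (c (i + Suc n))) < \<delta> / 2) sequentially"
    by (rule eventually_sequentially_Suc[THEN iffD2])
  then show ?thesis
  proof eventually_elim
    case (elim n)
    define A where "A w = (\<Sum>k\<le>n. c k * w ^ k)" for w
    have "\<delta> / 2 \<le> norm (A w)" if w: "norm w < 1" for w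
    proof -
      have "norm (G w - A w) \<le> (\<Sum>i. norm (c (i + Suc n)))"
        using norm_power_series_minus_partial_sum_le[OF summable sums[OF w], of "Suc n"] w
        by (simp add: A_def lessThan_Suc_atMost)
      then show ?thesis
        using elim lower[OF w] norm_triangle_ineq2[of "G w" "A w"] by linarith
    qed
    then have "closure (ball 0 1) \<subseteq> {w. \<delta> / 2 \<le> norm (A w)}"
      by (intro closure_minimal closed_Collect_le) (auto simp: A_def intro!: continuous_intros)
    then show ?case
      using \<open>0 < \<delta>\<close> by (force simp: A_def)
  qed
qed

section \<open>Self-inversive polynomials with zeros on the unit circle\<close>

lemma inj_on_exp_i_times_interval:
  "inj_on (\<lambda>t. exp (\<i> * complex_of_real t)) {0<..<2 * pi}"
proof (rule inj_onI)
  fix a b assume a: "a \<in> {0<..<2 * pi}" and b: "b \<in> {0<..<2 * pi}"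
    and eq: "exp (\<i> * complex_of_real a) = exp (\<i> * complex_of_real b)"
  have "\<i> * complex_of_real t \<in> ball (\<i> * pi) pi" if "t \<in> {0<..<2 * pi}" for t
    using that by (simp add: dist_norm norm_mult abs_less_iff flip: right_diff_distrib of_real_diff)
  then have "\<i> * complex_of_real a = \<i> * complex_of_real b"
    using inj_onD[OF inj_on_exp_pi eq] a b by blast
  then show "a = b"
    by simp
qed

lemma IVT_strict:
  fixes f :: "real \<Rightarrow> real"
  assumes "a \<le> b" "continuous_on {a..b} f" "f a < y" "y < f b"
  obtains t where "a < t" "t < b" "f t = y"
proof -
  obtain t where "a \<le> t" "t \<le> b" "f t = y"
    using IVT'[of f a y b] assms by (auto simp: less_imp_le)
  moreover have "t \<noteq> a" "t \<noteq> b"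
    using \<open>f t = y\<close> assms(3,4) by auto
  ultimately show ?thesis
    by (intro that[of t]) auto
qed

lemma exp_reflection_eq_minus:
  fixes l :: complex and c t :: real
  assumes "real N * t + c - 2 * Im l = (2 * real k + 1) * pi"
  shows "exp (\<i> * complex_of_real c) * exp (\<i> * complex_of_real t) ^ N * cnj (exp l) = - exp l"
proof -
  have power: "exp (\<i> * complex_of_real t) ^ N = exp (\<i> * complex_of_real (real N * t))"
    by (simp add: mult_ac flip: exp_of_nat_mult)
  have arg: "\<i> * complex_of_real c + \<i> * complex_of_real (real N * t) + cnj l
      = l + of_nat (2 * k + 1) * (complex_of_real pi * \<i>)"
    using assms by (intro complex_eqI) (simp_all add: algebra_simps)
  have "exp (\<i> * complex_of_real c) * exp (\<i> * complex_of_real t) ^ N * cnj (exp l)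
      = exp (\<i> * complex_of_real c + \<i> * complex_of_real (real N * t) + cnj l)"
    unfolding power by (simp add: exp_cnj exp_add)
  also have "\<dots> = exp l * exp (complex_of_real pi * \<i>) ^ (2 * k + 1)"
    unfolding arg by (simp only: exp_add exp_of_nat_mult)
  also have "\<dots> = - exp l"
    by simp
  finally show ?thesis .
qed

lemma IVT_odd_half_multiples_of_pi:
  fixes psi :: "real \<Rightarrow> real"
  assumes "continuous_on {0..2 * pi} psi" "psi 0 = 0" "psi (2 * pi) = real N * pi"
  obtains th where "inj_on th {1..N}" "th ` {1..N} \<subseteq> {0<..<2 * pi}"
    "\<And>k. k \<in> {1..N} \<Longrightarrow> psi (th k) = real k * pi - pi / 2"
proof -
  have "\<exists>t. 0 < t \<and> t < 2 * pi \<and> psi t = real k * pi - pi / 2" if "k \<in> {1..N}" for k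
  proof -
    have "1 * pi \<le> real k * pi" "real k * pi \<le> real N * pi"
      using that by (intro mult_right_mono; simp)+
    then have "psi 0 < real k * pi - pi / 2" "real k * pi - pi / 2 < psi (2 * pi)"
      using assms(2,3) pi_gt_zero by linarith+
    moreover have "(0::real) \<le> 2 * pi"
      by simp
    ultimately show ?thesis
      using IVT_strict[OF _ assms(1)] by metis
  qed
  then obtain th where th: "\<And>k. k \<in> {1..N} \<Longrightarrow> th k \<in> {0<..<2 * pi} \<and> psi (th k) = real k * pi - pi / 2"
    by (metis greaterThanLessThan_iff)
  show ?thesis
  proof
    show "inj_on th {1..N}"
    proof (rule inj_onI)
      fix a b assume "a \<in> {1..N}" "b \<in> {1..N}" "th a = th b"
      then have "real a * pi - pi / 2 = real b * pi - pi / 2"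
        using th by metis
      then show "a = b"
        by simp
    qed
  qed (use th in auto)
qed

lemma reflection_eq_has_distinct_circle_solutions:
  fixes A :: "complex \<Rightarrow> complex" and N :: nat
  assumes cont: "continuous_on (cball 0 1) A" and nonzero: "\<And>z. norm z \<le> 1 \<Longrightarrow> A z \<noteq> 0"
  obtains u w where "inj_on w {1..N}" "\<And>k. k \<in> {1..N} \<Longrightarrow> norm (w k) = 1"
    "\<And>k. k \<in> {1..N} \<Longrightarrow> u * w k ^ N * cnj (A (w k)) = - A (w k)"
proof -
  obtain L where cont_L: "continuous_on (cball 0 1) L" and L: "\<And>z. z \<in> cball 0 1 \<Longrightarrow> A z = exp (L z)"
    using continuous_logarithm_on_cball[OF cont] nonzero by auto
  define e where "e t = exp (\<i> * complex_of_real t)" for t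
  have norm_e: "norm (e t) = 1" for t
    by (simp add: e_def norm_exp_eq_Re)
  define ph where "ph t = Im (L (e t))" for t
  define psi where "psi t = real N * t / 2 + ph 0 - ph t" for t
  \<comment> \<open>\<open>2 * psi t\<close> is a continuous argument of \<open>e t ^ N * cnj (A (e t)) / A (e t)\<close>, normalised to vanish
    at \<open>t = 0\<close>; it increases by \<open>N * 2 * pi\<close> over one turn because \<open>ph\<close> is \<open>2 * pi\<close>-periodic.\<close>
  have "continuous_on S e" for S
    unfolding e_def by (intro continuous_intros)
  then have "continuous_on {0..2 * pi} psi"
    unfolding psi_def ph_def
    by (intro continuous_intros continuous_on_compose2[OF cont_L]) (auto simp: norm_e)
  moreover have "psi 0 = 0" "psi (2 * pi) = real N * pi"
    by (simp_all add: psi_def ph_def e_def mult.commute)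
  ultimately obtain th where th: "inj_on th {1..N}" "th ` {1..N} \<subseteq> {0<..<2 * pi}"
    and psi_th: "\<And>k. k \<in> {1..N} \<Longrightarrow> psi (th k) = real k * pi - pi / 2"
    using IVT_odd_half_multiples_of_pi by blast
  show ?thesis
  proof
    show "inj_on (\<lambda>k. e (th k)) {1..N}"
      using comp_inj_on[OF th(1) inj_on_subset[OF inj_on_exp_i_times_interval th(2)]]
      unfolding e_def o_def .
    show "norm (e (th k)) = 1" for k
      by (rule norm_e)
    show "e (2 * ph 0) * e (th k) ^ N * cnj (A (e (th k))) = - A (e (th k))" if "k \<in> {1..N}" for k
    proof -
      have "A (e (th k)) = exp (L (e (th k)))"
        using L norm_e by simp
      moreover have "real N * th k + 2 * ph 0 - 2 * Im (L (e (th k))) = (2 * real (k - 1) + 1) * pi"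
        using psi_th[OF that] that by (simp add: psi_def ph_def of_nat_diff algebra_simps)
      ultimately show ?thesis
        using exp_reflection_eq_minus[folded e_def] by simp
    qed
  qed
qed

lemma poly_eq_smult_prod_roots:
  fixes p :: "'a::idom poly"
  assumes "finite S" "inj_on w S" "degree p \<le> card S" and roots: "\<And>k. k \<in> S \<Longrightarrow> poly p (w k) = 0"
  shows "p = smult (coeff p (card S)) (\<Prod>k\<in>S. [:- w k, 1:])"
proof (rule ccontr)
  define q where "q = (\<Prod>k\<in>S. [:- w k, 1:])"
  define r where "r = p - smult (coeff p (card S)) q"
  assume "p \<noteq> smult (coeff p (card S)) (\<Prod>k\<in>S. [:- w k, 1:])"
  then have "r \<noteq> 0"
    by (simp add: r_def q_def)
  have "degree q = card S" "coeff q (card S) = 1"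
    using lead_coeff_prod[of "\<lambda>k. [:- w k, 1:]" S] assms(1)
    by (simp_all add: q_def degree_prod_sum_eq)
  then have "degree (smult (coeff p (card S)) q) \<le> card S"
    using degree_smult_le[of "coeff p (card S)" q] by simp
  then have "degree r \<le> card S"
    unfolding r_def by (rule degree_diff_le[OF assms(3)])
  moreover have "coeff r (card S) = 0"
    using \<open>coeff q (card S) = 1\<close> by (simp add: r_def)
  ultimately have "degree r < card S"
    using \<open>r \<noteq> 0\<close> by (metis leading_coeff_0_iff order_le_less)
  moreover have "w ` S \<subseteq> {x. poly r x = 0}"
    using roots assms(1) by (auto simp: r_def q_def poly_prod)
  then have "card S \<le> card {x. poly r x = 0}"
    using card_mono[OF poly_roots_finite[OF \<open>r \<noteq> 0\<close>]] card_image[OF assms(2)] by metis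
  ultimately show False
    using card_poly_roots_bound[OF \<open>r \<noteq> 0\<close>] by simp
qed

lemma poly_eq_prod_one_minus_inverse_roots:
  fixes p :: "'a::field poly"
  assumes "finite S" "inj_on w S" "degree p \<le> card S" and roots: "\<And>k. k \<in> S \<Longrightarrow> poly p (w k) = 0"
    and "poly p 0 = 1"
  shows "p = (\<Prod>k\<in>S. [:1, - inverse (w k):])"
proof -
  define c where "c = coeff p (card S)"
  have p: "p = smult c (\<Prod>k\<in>S. [:- w k, 1:])"
    unfolding c_def by (rule poly_eq_smult_prod_roots[OF assms(1-4)])
  have nonzero: "w k \<noteq> 0" if "k \<in> S" for k
    using roots[OF that] \<open>poly p 0 = 1\<close> by auto
  have "c * (\<Prod>k\<in>S. - w k) = 1"
    using \<open>poly p 0 = 1\<close> by (simp add: p poly_prod)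
  then have "c = inverse (\<Prod>k\<in>S. - w k)"
    by (metis inverse_unique mult.commute)
  also have "\<dots> = (\<Prod>k\<in>S. - inverse (w k))"
    by (simp add: o_def flip: prod_inversef)
  finally have "p = smult (\<Prod>k\<in>S. - inverse (w k)) (\<Prod>k\<in>S. [:- w k, 1:])"
    by (simp add: p)
  also have "\<dots> = (\<Prod>k\<in>S. smult (- inverse (w k)) [:- w k, 1:])"
    by (rule prod_smult[symmetric])
  also have "\<dots> = (\<Prod>k\<in>S. [:1, - inverse (w k):])"
    by (rule prod.cong) (simp_all add: nonzero)
  finally show ?thesis .
qed

text \<open>For \<open>u = 1\<close> and \<open>N = 2 * n + 1\<close> this is the paper's \<open>P\<^sub>n(g; z) = s\<^sub>n(z) + z\<^sup>N conj(s\<^sub>n)(1/z)\<close>;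
  the extra unimodular factor \<open>u\<close> is what allows its zeros to be located by the intermediate value theorem.\<close>

definition self_inversive_poly :: "complex \<Rightarrow> nat \<Rightarrow> nat \<Rightarrow> (nat \<Rightarrow> complex) \<Rightarrow> complex poly" where
  "self_inversive_poly u N n g = (\<Sum>k\<le>n. monom (g k) k) + (\<Sum>k\<le>n. monom (u * cnj (g k)) (N - k))"

lemma coeff_self_inversive_poly:
  "coeff (self_inversive_poly u N n g) j
     = (if j \<le> n then g j else 0) + (\<Sum>k\<le>n. if N - k = j then u * cnj (g k) else 0)"
  by (simp add: self_inversive_poly_def coeff_sum)

lemma coeff_self_inversive_poly_low:
  assumes "2 * n < N" "j \<le> n"
  shows "coeff (self_inversive_poly u N n g) j = g j"
proof -
  have "(\<Sum>k\<le>n. if N - k = j then u * cnj (g k) else 0) = 0"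
    using assms by (intro sum.neutral) auto
  then show ?thesis
    using assms(2) by (simp add: coeff_self_inversive_poly)
qed

lemma degree_self_inversive_poly:
  assumes "n \<le> N"
  shows "degree (self_inversive_poly u N n g) \<le> N"
proof (rule degree_le, intro allI impI)
  fix i assume "N < i"
  moreover have "(\<Sum>k\<le>n. if N - k = i then u * cnj (g k) else 0) = 0"
    using calculation by (intro sum.neutral) auto
  ultimately show "coeff (self_inversive_poly u N n g) i = 0"
    using assms by (simp add: coeff_self_inversive_poly)
qed

lemma poly_self_inversive_poly_on_circle:
  assumes "norm x = 1" "n \<le> N"
  shows "poly (self_inversive_poly u N n g) x
           = (\<Sum>k\<le>n. g k * x ^ k) + u * x ^ N * cnj (\<Sum>k\<le>n. g k * x ^ k)"
proof -
  have "x ^ (N - k) = x ^ N * cnj x ^ k" if "k \<le> n" for k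
  proof -
    have "x ^ N = x ^ (N - k) * x ^ k"
      using that assms(2) by (simp flip: power_add)
    then have "x ^ N * cnj x ^ k = x ^ (N - k) * (x * cnj x) ^ k"
      by (simp add: power_mult_distrib mult_ac)
    then show ?thesis
      using assms(1) complex_norm_square[of x] by simp
  qed
  then show ?thesis
    by (simp add: self_inversive_poly_def poly_sum poly_monom cnj_sum sum_distrib_left mult_ac)
qed

lemma exists_unimodular_nodes_with_prod_coeffs:
  fixes g :: "nat \<Rightarrow> complex"
  assumes "g 0 = 1" and nonzero: "\<And>w. norm w \<le> 1 \<Longrightarrow> (\<Sum>k\<le>n. g k * w ^ k) \<noteq> 0"
  obtains lam where "inj_on lam {1..2 * n + 1}" "\<And>k. k \<in> {1..2 * n + 1} \<Longrightarrow> norm (lam k) = 1"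
    "\<And>j. j \<le> n \<Longrightarrow> (\<Prod>k\<in>{1..2 * n + 1}. 1 - fps_const (lam k) * fps_X) $ j = g j"
proof -
  define N where "N = 2 * n + 1"
  define A where "A w = (\<Sum>k\<le>n. g k * w ^ k)" for w
  obtain u w where inj: "inj_on w {1..N}" and unimodular: "\<And>k. k \<in> {1..N} \<Longrightarrow> norm (w k) = 1"
    and reflection: "\<And>k. k \<in> {1..N} \<Longrightarrow> u * w k ^ N * cnj (A (w k)) = - A (w k)"
    by (rule reflection_eq_has_distinct_circle_solutions[of A])
       (use nonzero in \<open>auto simp: A_def intro!: continuous_intros\<close>)
  define p where "p = self_inversive_poly u N n g"
  have low_coeffs: "coeff p j = g j" if "j \<le> n" for j
    using that by (simp add: p_def N_def coeff_self_inversive_poly_low)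
  have p: "p = (\<Prod>k\<in>{1..N}. [:1, - inverse (w k):])"
  proof (rule poly_eq_prod_one_minus_inverse_roots[OF _ inj])
    show "degree p \<le> card {1..N}"
      using degree_self_inversive_poly[of n N] by (simp add: p_def N_def)
    show "poly p (w k) = 0" if "k \<in> {1..N}" for k
      using reflection[OF that] poly_self_inversive_poly_on_circle[OF unimodular[OF that]]
      by (simp add: p_def A_def N_def)
    show "poly p 0 = 1"
      using low_coeffs[of 0] \<open>g 0 = 1\<close> by (simp add: poly_0_coeff_0)
  qed simp
  have "fps_of_poly p = (\<Prod>k\<in>{1..N}. 1 - fps_const (inverse (w k)) * fps_X)"
    unfolding p fps_of_poly_prod
    by (intro prod.cong refl) (auto simp: fps_eq_iff coeff_pCons split: nat.split)
  then have "(\<Prod>k\<in>{1..N}. 1 - fps_const (inverse (w k)) * fps_X) $ j = g j" if "j \<le> n" for j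
    using low_coeffs[OF that] by (metis fps_of_poly_nth)
  moreover have "inj_on (\<lambda>k. inverse (w k)) {1..N}"
  proof (rule inj_onI)
    fix a b assume "a \<in> {1..N}" "b \<in> {1..N}" "inverse (w a) = inverse (w b)"
    then show "a = b"
      using inj_onD[OF inj] by (metis inverse_inverse_eq)
  qed
  ultimately show ?thesis
    using that unimodular by (simp add: N_def norm_inverse)
qed

section \<open>Newton's identities\<close>

lemma geometric_fps_times_one_minus:
  fixes c :: "'a::comm_ring_1"
  shows "Abs_fps (\<lambda>m. c ^ Suc m) * (1 - fps_const c * fps_X) = fps_const c"
proof -
  have "Abs_fps (\<lambda>m. c ^ Suc m) * (1 - fps_const c * fps_X)
      = Abs_fps (\<lambda>m. c ^ Suc m) - fps_const c * (Abs_fps (\<lambda>m. c ^ Suc m) * fps_X)"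
    by (simp add: algebra_simps)
  also have "\<dots> = fps_const c"
    by (simp add: fps_eq_iff) (metis Suc_pred power_Suc)
  finally show ?thesis .
qed

lemma fps_deriv_prod_one_minus_X:
  fixes c :: "'b \<Rightarrow> 'a::comm_ring_1"
  assumes "finite S"
  shows "fps_deriv (\<Prod>k\<in>S. 1 - fps_const (c k) * fps_X)
       = - ((\<Sum>k\<in>S. Abs_fps (\<lambda>m. c k ^ Suc m)) * (\<Prod>k\<in>S. 1 - fps_const (c k) * fps_X))"
  using assms
proof (induction S rule: finite_induct)
  case (insert x S)
  define P where "P = 1 - fps_const (c x) * fps_X"
  define Q where "Q = (\<Prod>k\<in>S. 1 - fps_const (c k) * fps_X)"
  define R where "R = Abs_fps (\<lambda>m. c x ^ Suc m)"
  define \<Sigma> where "\<Sigma> = (\<Sum>k\<in>S. Abs_fps (\<lambda>m. c k ^ Suc m))"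
  have "fps_deriv (P * Q) = P * fps_deriv Q - fps_const (c x) * Q"
    by (simp add: P_def fps_deriv_mult algebra_simps)
  also have "\<dots> = P * (- (\<Sigma> * Q)) - (R * P) * Q"
    using insert.IH by (simp only: P_def Q_def R_def \<Sigma>_def geometric_fps_times_one_minus)
  also have "\<dots> = - ((R + \<Sigma>) * (P * Q))"
    by (simp add: algebra_simps)
  finally show ?case
    using insert.hyps by (simp add: P_def Q_def R_def \<Sigma>_def)
qed simp

lemma fps_coeffs_eq_if_log_derivs_agree:
  fixes g q a p :: "'a::comm_ring_1 fps"
  assumes g: "fps_deriv g = - (a * g)" "g $ 0 = 1" and q: "fps_deriv q = - (p * q)"
    and agree: "\<And>j. j \<le> n \<Longrightarrow> q $ j = g $ j" and "i < n"
  shows "p $ i = a $ i"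
  using \<open>i < n\<close>
proof (induction i rule: less_induct)
  case (less i)
  have "(p * q) $ i = (a * g) $ i"
    using arg_cong[OF q, of "\<lambda>f. f $ i"] arg_cong[OF g(1), of "\<lambda>f. f $ i"] agree[of "Suc i"] less.prems
    by simp
  moreover have "(p * q) $ i = (\<Sum>j<i. a $ j * g $ (i - j)) + p $ i"
  proof -
    have "(p * q) $ i = (\<Sum>j<i. p $ j * q $ (i - j)) + p $ i * q $ 0"
      by (simp add: fps_mult_nth atLeast0AtMost lessThan_Suc_atMost[symmetric])
    also have "(\<Sum>j<i. p $ j * q $ (i - j)) = (\<Sum>j<i. a $ j * g $ (i - j))"
      using less by (intro sum.cong refl) (auto simp: agree)
    finally show ?thesis
      using agree[of 0] g(2) by simp
  qed
  moreover have "(a * g) $ i = (\<Sum>j<i. a $ j * g $ (i - j)) + a $ i"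
    using g(2) by (simp add: fps_mult_nth atLeast0AtMost lessThan_Suc_atMost[symmetric])
  ultimately show ?case
    by simp
qed

lemma power_sums_eq_if_prod_coeffs_eq:
  fixes lam :: "'b \<Rightarrow> 'a::comm_ring_1" and g a :: "'a fps"
  assumes "finite S" "fps_deriv g = - (a * g)" "g $ 0 = 1"
    and "\<And>j. j \<le> n \<Longrightarrow> (\<Prod>k\<in>S. 1 - fps_const (lam k) * fps_X) $ j = g $ j" and "i < n"
  shows "(\<Sum>k\<in>S. lam k ^ Suc i) = a $ i"
proof -
  have "(\<Sum>k\<in>S. Abs_fps (\<lambda>m. lam k ^ Suc m)) $ i = a $ i"
    by (rule fps_coeffs_eq_if_log_derivs_agree[OF assms(2,3) fps_deriv_prod_one_minus_X[OF assms(1)]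
          assms(4,5)])
  then show ?thesis
    by (simp add: fps_sum_nth)
qed

section \<open>Unimodular nodes with prescribed power sums\<close>

lemma eventually_unimodular_nodes_with_power_sums:
  fixes F :: "complex \<Rightarrow> complex" and a :: "nat \<Rightarrow> complex"
  assumes holo: "F holomorphic_on ball 0 1" and bound: "\<And>w. norm w < 1 \<Longrightarrow> norm (F w) \<le> B"
    and sums: "\<And>w. norm w < 1 \<Longrightarrow> (\<lambda>j. a j * w ^ j) sums F w"
  shows "eventually (\<lambda>n. \<exists>lam. inj_on lam {1..2 * n + 1} \<and> (\<forall>k\<in>{1..2 * n + 1}. norm (lam k) = 1)
           \<and> (\<forall>i<n. (\<Sum>k\<in>{1..2 * n + 1}. lam k ^ Suc i) = a i)) sequentially"
proof -
  obtain G where G: "G holomorphic_on ball 0 1" "G 0 = 1"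
    and ode: "\<And>w. norm w < 1 \<Longrightarrow> deriv G w = - (F w * G w)"
    and G_bounds: "\<And>w. norm w < 1 \<Longrightarrow> exp (- B) \<le> norm (G w) \<and> norm (G w) \<le> exp B"
    using exists_exp_neg_primitive[OF holo bound] by blast
  define g where "g = fps_expansion G 0"
  have G_expansion: "G has_fps_expansion g"
    unfolding g_def by (rule has_fps_expansion_fps_expansion[OF open_ball _ G(1)]) simp
  then have g0: "g $ 0 = 1"
    using has_fps_expansion_imp_0_eq_fps_nth_0 G(2) by metis
  have g_sums: "(\<lambda>k. g $ k * w ^ k) sums G w" if "norm w < 1" for w
    using G_expansion G(1) that
    by (intro has_fps_expansion_imp_sums_complex[where r = 1]) (auto simp: one_ereal_def)
  have g_ode: "fps_deriv g = - (Abs_fps a * g)"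
    unfolding g_def using has_fps_expansion_if_sums[OF zero_less_one sums] ode
    by (intro fps_deriv_fps_expansion_linear_ode[OF open_ball _ G(1)]) auto
  have "norm (deriv G w) \<le> B * exp B" if "norm w < 1" for w
    using ode[OF that] bound[OF that] G_bounds[OF that] order_trans[OF norm_ge_zero bound[OF that]]
    by (auto simp: norm_mult intro: mult_mono)
  then have "summable (\<lambda>k. norm (g $ k))"
    unfolding g_def by (rule summable_norm_fps_expansion_if_deriv_bounded[OF G(1)])
  then have "eventually (\<lambda>n. \<forall>w. norm w \<le> 1 \<longrightarrow> (\<Sum>k\<le>n. g $ k * w ^ k) \<noteq> 0) sequentially"
    by (rule eventually_partial_sums_nonzero_on_cball[OF _ g_sums]) (use G_bounds in auto)
  then show ?thesis
  proof eventually_elim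
    case (elim n)
    then obtain lam where lam: "inj_on lam {1..2 * n + 1}" "\<And>k. k \<in> {1..2 * n + 1} \<Longrightarrow> norm (lam k) = 1"
      "\<And>j. j \<le> n \<Longrightarrow> (\<Prod>k\<in>{1..2 * n + 1}. 1 - fps_const (lam k) * fps_X) $ j = g $ j"
      using exists_unimodular_nodes_with_prod_coeffs[of "\<lambda>k. g $ k" n] g0 by blast
    have "(\<Sum>k\<in>{1..2 * n + 1}. lam k ^ Suc i) = a i" if "i < n" for i
      using power_sums_eq_if_prod_coeffs_eq[OF _ g_ode g0 lam(3) that] by simp
    with lam show ?case
      by blast
  qed
qed

section \<open>The error estimate\<close>

lemma norm_sums_le_geometric_tail:
  fixes e :: "nat \<Rightarrow> 'a::banach" and C q :: real
  assumes "e sums S" and vanish: "\<And>j. j < n \<Longrightarrow> e j = 0" and bound: "\<And>j. norm (e j) \<le> C * q ^ j"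
    and "0 \<le> q" "q < 1"
  shows "norm S \<le> C * q ^ n / (1 - q)"
proof -
  have "norm (norm q) < 1"
    using assms(4,5) by simp
  from sums_mult[OF geometric_sums[OF this], of "C * q ^ n"]
  have geometric: "(\<lambda>i. C * q ^ n * q ^ i) sums (C * q ^ n / (1 - q))"
    using assms(4) by simp
  have "summable (\<lambda>j. C * q ^ j)"
    using assms(4,5) by (intro summable_mult summable_geometric) simp
  then have "summable (\<lambda>j. norm (e j))"
    by (rule summable_comparison_test') (simp add: bound)
  then have "norm (S - (\<Sum>j<n. e j)) \<le> (\<Sum>i. norm (e (i + n)))"
    by (rule norm_sums_minus_partial_sum_le[OF \<open>e sums S\<close>])
  also have "\<dots> \<le> (\<Sum>i. C * q ^ n * q ^ i)"
  proof (rule suminf_le)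
    show "norm (e (i + n)) \<le> C * q ^ n * q ^ i" for i
      using bound[of "i + n"] by (simp add: power_add mult_ac)
    show "summable (\<lambda>i. norm (e (i + n)))"
      using \<open>summable (\<lambda>j. norm (e j))\<close> by (rule summable_iff_shift[THEN iffD2])
  qed (rule sums_summable[OF geometric])
  also have "\<dots> = C * q ^ n / (1 - q)"
    using geometric by (simp add: sums_iff)
  finally show ?thesis
    by (simp add: vanish)
qed

lemma HN_sums:
  assumes "\<And>z. norm z < 1 \<Longrightarrow> summable (\<lambda>j. h j * z ^ j)"
    and "\<And>k. k \<in> {1..N} \<Longrightarrow> norm (lam k) = 1" and "norm z < 1"
  shows "(\<lambda>j. h j * (\<Sum>k\<in>{1..N}. lam k ^ Suc j) * z ^ j) sums HN h N lam z"
proof -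
  have "(\<lambda>j. lam k * (h j * (lam k * z) ^ j)) sums (lam k * pser h (lam k * z))"
    if "k \<in> {1..N}" for k
  proof -
    have "norm (lam k * z) < 1"
      using assms(2)[OF that] assms(3) by (simp add: norm_mult)
    then have "(\<lambda>j. h j * (lam k * z) ^ j) sums pser h (lam k * z)"
      unfolding pser_def by (rule summable_sums[OF assms(1)])
    then show ?thesis
      by (rule sums_mult)
  qed
  then have "(\<lambda>j. \<Sum>k\<in>{1..N}. lam k * (h j * (lam k * z) ^ j)) sums HN h N lam z"
    unfolding HN_def by (rule sums_sum)
  moreover have "(\<Sum>k\<in>{1..N}. lam k * (h j * (lam k * z) ^ j))
      = h j * (\<Sum>k\<in>{1..N}. lam k ^ Suc j) * z ^ j" for j
    by (simp add: sum_distrib_left sum_distrib_right power_mult_distrib mult_ac)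
  ultimately show ?thesis
    by simp
qed

lemma norm_HN_minus_pser_le:
  fixes h f a lam :: "nat \<Rightarrow> complex"
  assumes h: "\<And>j. norm (h j) \<le> M" and h_summable: "\<And>z. norm z < 1 \<Longrightarrow> summable (\<lambda>j. h j * z ^ j)"
    and f: "\<And>j. f j = h j * a j" and a: "\<And>j. norm (a j) \<le> B"
    and unimodular: "\<And>k. k \<in> {1..N} \<Longrightarrow> norm (lam k) = 1"
    and power_sums: "\<And>i. i < n \<Longrightarrow> (\<Sum>k\<in>{1..N}. lam k ^ Suc i) = a i"
    and z: "norm z < 1"
  shows "norm (HN h N lam z - pser f z) \<le> M * (real N + B) * norm z ^ n / (1 - norm z)"
proof -
  define P where "P j = (\<Sum>k\<in>{1..N}. lam k ^ Suc j)" for j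
  have M: "0 \<le> M"
    using order_trans[OF norm_ge_zero h[of 0]] .
  have "summable (\<lambda>j. h j * a j * z ^ j)"
  proof (rule summable_comparison_test'[where g = "\<lambda>j. M * B * norm z ^ j"])
    show "summable (\<lambda>j. M * B * norm z ^ j)"
      using z by (intro summable_mult summable_geometric) simp
    show "norm (h j * a j * z ^ j) \<le> M * B * norm z ^ j" for j
      unfolding norm_mult norm_power using h[of j] a[of j] M by (intro mult_mono mult_right_mono) auto
  qed
  then have "(\<lambda>j. h j * a j * z ^ j) sums pser f z"
    by (simp add: pser_def f summable_sums)
  from sums_diff[OF HN_sums[OF h_summable unimodular z] this]
  have "(\<lambda>j. h j * (P j - a j) * z ^ j) sums (HN h N lam z - pser f z)"
    by (simp add: P_def algebra_simps)
  moreover have "h j * (P j - a j) * z ^ j = 0" if "j < n" for j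
    using power_sums[OF that] by (simp add: P_def)
  moreover have "norm (h j * (P j - a j) * z ^ j) \<le> M * (real N + B) * norm z ^ j" for j
  proof -
    have "norm (P j) \<le> (\<Sum>k\<in>{1..N}. norm (lam k ^ Suc j))"
      unfolding P_def by (rule norm_sum)
    also have "\<dots> = (\<Sum>k\<in>{1..N}. 1)"
      by (intro sum.cong refl) (simp only: norm_power unimodular power_one)
    finally have "norm (P j - a j) \<le> real N + B"
      using norm_triangle_ineq4[of "P j" "a j"] a[of j] by simp
    then show ?thesis
      unfolding norm_mult norm_power using h[of j] M by (intro mult_mono mult_right_mono) auto
  qed
  ultimately show ?thesis
    by (rule norm_sums_le_geometric_tail) (use z in auto)
qed

lemma cube_le_power_one_plus:
  fixes x :: real
  assumes "0 \<le> x" "3 * m \<le> k"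
  shows "(real m * x) ^ 3 \<le> (1 + x) ^ k"
proof -
  have "(real m * x) ^ 3 \<le> (1 + real m * x) ^ 3"
    using assms by (intro power_mono) auto
  also have "\<dots> \<le> ((1 + x) ^ m) ^ 3"
    using assms by (intro power_mono Bernoulli_inequality) auto
  also have "\<dots> = (1 + x) ^ (3 * m)"
    by (simp add: mult.commute flip: power_mult)
  also have "\<dots> \<le> (1 + x) ^ k"
    using assms by (intro power_increasing) auto
  finally show ?thesis .
qed

lemma linear_le_power_growth:
  fixes t B :: real
  assumes "0 < t" "0 \<le> B" "3 * (nat \<lceil>B\<rceil> + 10) \<le> n"
  shows "(real (2 * n + 1) + B) * t ^ 3 \<le> 32 * (1 + t / 4) ^ (n + 1)"
proof -
  define m where "m = n div 3"
  have "3 * (nat \<lceil>B\<rceil> + 10) div 3 \<le> m"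
    unfolding m_def by (rule div_le_mono[OF assms(3)])
  then have "real (nat \<lceil>B\<rceil>) + 10 \<le> real m"
    by simp
  then have "B + 10 \<le> real m"
    using real_nat_ceiling_ge[of B] by linarith
  moreover have "real n \<le> 3 * real m + 2"
    unfolding m_def by linarith
  ultimately have m: "B + 10 \<le> real m" "real n \<le> 3 * real m + 2" .
  then have "10 * 10 \<le> real m * real m"
    using assms(2) by (intro mult_mono) auto
  then have "real m * 100 \<le> real m * (real m * real m)"
    by (intro mult_left_mono) auto
  also have "\<dots> = real m ^ 3"
    by (simp add: power3_eq_cube)
  finally have "real (2 * n + 1) + B \<le> real m ^ 3 / 2"
    using m assms(2) by linarith
  then have "(real (2 * n + 1) + B) * t ^ 3 \<le> 32 * (real m * (t / 4)) ^ 3"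
    using assms(1) by (simp add: power_mult_distrib power_divide mult_right_mono)
  also have "\<dots> \<le> 32 * (1 + t / 4) ^ (n + 1)"
  proof -
    have "3 * m \<le> n + 1"
      unfolding m_def by linarith
    then show ?thesis
      using cube_le_power_one_plus[of "t / 4" m "n + 1"] assms(1) by simp
  qed
  finally show ?thesis .
qed

lemma error_bound_le_majorant:
  fixes s M B :: real
  assumes s: "0 \<le> s" "s < 1" and "0 \<le> M" "0 \<le> B" "3 * (nat \<lceil>B\<rceil> + 10) \<le> n"
  shows "M * (real (2 * n + 1) + B) * s ^ n / (1 - s)
           \<le> s ^ n * (5 - s) ^ (n + 1) / 4 powi (int n - 1) * (2 * M / 3) * ((3 + s) / (1 - s) ^ 4)"
proof -
  define t where "t = 1 - s"
  define X where "X = (1 + t / 4) ^ (n + 1)"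
  have t: "0 < t"
    using s by (simp add: t_def)
  have "(5 - s) ^ (n + 1) / 4 powi (int n - 1) = 16 * X"
  proof -
    have "int n - 1 = int (n - 1)" "n + 1 = (n - 1) + 2"
      using assms(5) by auto
    then have "(4::real) powi (int n - 1) = 4 ^ (n - 1)" "(4::real) ^ (n + 1) = 4 ^ (n - 1) * 16"
      by (simp_all only: power_int_of_nat power_add) simp
    moreover have "5 - s = 4 * (1 + t / 4)"
      by (simp add: t_def)
    then have "(5 - s) ^ (n + 1) = 4 ^ (n + 1) * X"
      by (simp only: X_def power_mult_distrib)
    ultimately show ?thesis
      by simp
  qed
  then have majorant: "s ^ n * (5 - s) ^ (n + 1) / 4 powi (int n - 1) * (2 * M / 3) * ((3 + s) / (1 - s) ^ 4)
      = s ^ n * ((32 / 3 * (3 + s)) * (M * X) / t ^ 4)"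
    by (simp add: t_def field_simps)
  have "M * ((real (2 * n + 1) + B) * t ^ 3) \<le> M * (32 * X)"
    using linear_le_power_growth[OF t assms(4,5)] assms(3) by (simp add: X_def mult_left_mono)
  also have "\<dots> \<le> (32 / 3 * (3 + s)) * (M * X)"
    using s t assms(3) by (simp add: X_def mult_right_mono)
  finally have key: "M * ((real (2 * n + 1) + B) * t ^ 3) \<le> (32 / 3 * (3 + s)) * (M * X)" .
  have "M * (real (2 * n + 1) + B) * s ^ n / (1 - s)
      = s ^ n * (M * ((real (2 * n + 1) + B) * t ^ 3) / t ^ 4)"
    unfolding t_def[symmetric] using t by (simp add: field_simps eval_nat_numeral)
  also have "\<dots> \<le> s ^ n * ((32 / 3 * (3 + s)) * (M * X) / t ^ 4)"
    using key s t by (intro mult_left_mono divide_right_mono) auto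
  finally show ?thesis
    unfolding majorant .
qed

lemma norm_HN_minus_pser_le_majorant:
  fixes h f lam :: "nat \<Rightarrow> complex"
  assumes h: "\<And>j. 0 < norm (h j) \<and> norm (h j) \<le> M"
    and h_summable: "\<And>z. norm z < 1 \<Longrightarrow> summable (\<lambda>j. h j * z ^ j)"
    and coeffs: "\<And>j. norm (f j / h j) \<le> B" and n: "3 * (nat \<lceil>B\<rceil> + 10) \<le> n"
    and unimodular: "\<forall>k\<in>{1..2 * n + 1}. norm (lam k) = 1"
    and power_sums: "\<forall>i<n. (\<Sum>k\<in>{1..2 * n + 1}. lam k ^ Suc i) = f i / h i"
  shows "\<forall>z. norm z < 1 \<longrightarrow> norm (HN h (2 * n + 1) lam z - pser f z)
           \<le> norm z ^ n * (5 - norm z) ^ (n + 1) / 4 powi (int n - 1) * (2 * M / 3)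
              * ((3 + norm z) / (1 - norm z) ^ 4)"
proof (intro allI impI)
  fix z :: complex assume z: "norm z < 1"
  have "norm (HN h (2 * n + 1) lam z - pser f z) \<le> M * (real (2 * n + 1) + B) * norm z ^ n / (1 - norm z)"
    by (rule norm_HN_minus_pser_le[where a = "\<lambda>j. f j / h j"])
       (use h h_summable coeffs unimodular power_sums z in auto)
  also have "\<dots> \<le> norm z ^ n * (5 - norm z) ^ (n + 1) / 4 powi (int n - 1) * (2 * M / 3)
      * ((3 + norm z) / (1 - norm z) ^ 4)"
    using order_trans[OF norm_ge_zero conjunct2[OF h[of 0]]] order_trans[OF norm_ge_zero coeffs[of 0]]
    by (intro error_bound_le_majorant[OF norm_ge_zero z _ _ n]) auto
  finally show "norm (HN h (2 * n + 1) lam z - pser f z)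
      \<le> norm z ^ n * (5 - norm z) ^ (n + 1) / 4 powi (int n - 1) * (2 * M / 3)
         * ((3 + norm z) / (1 - norm z) ^ 4)" .
qed

theorem theorem2p2:
  fixes h f :: "nat \<Rightarrow> complex" and M :: real
  assumes hcoef: "\<And>j. 0 < norm (h j) \<and> norm (h j) \<le> M"
    and hanalytic: "\<And>z. norm z < 1 \<Longrightarrow> summable (\<lambda>j. h j * z ^ j)"
    and Fbdd: "\<exists>F. F holomorphic_on ball 0 1 \<and> bounded (F ` ball 0 1) \<and>
                 (\<forall>z\<in>ball 0 1. ((\<lambda>j. (f j / h j) * z ^ j) sums F z))"
  shows "\<exists>n1::nat. \<forall>n\<ge>n1. \<exists>lam :: nat \<Rightarrow> complex.
           inj_on lam {1..2*n+1} \<and> (\<forall>k\<in>{1..2*n+1}. norm (lam k) = 1) \<and>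
           (\<forall>z. norm z < 1 \<longrightarrow>
              norm (HN h (2*n+1) lam z - pser f z)
                \<le> norm z ^ n * (5 - norm z) ^ (n+1) / 4 powi (int n - 1)
                   * (2 * M / 3) * ((3 + norm z) / (1 - norm z) ^ 4))"
proof -
  obtain F where F: "F holomorphic_on ball 0 1" "bounded (F ` ball 0 1)"
    and sums: "\<And>w. norm w < 1 \<Longrightarrow> (\<lambda>j. (f j / h j) * w ^ j) sums F w"
    using Fbdd by (auto simp: dist_norm)
  from F(2) obtain B where B: "\<And>w. norm w < 1 \<Longrightarrow> norm (F w) \<le> B"
    unfolding bounded_iff by (metis image_eqI mem_ball_0)
  have "eventually (\<lambda>n. \<exists>lam. inj_on lam {1..2*n+1} \<and> (\<forall>k\<in>{1..2*n+1}. norm (lam k) = 1) \<and>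
           (\<forall>z. norm z < 1 \<longrightarrow>
              norm (HN h (2*n+1) lam z - pser f z)
                \<le> norm z ^ n * (5 - norm z) ^ (n+1) / 4 powi (int n - 1)
                   * (2 * M / 3) * ((3 + norm z) / (1 - norm z) ^ 4))) sequentially"
    (is "eventually ?good sequentially")
    using eventually_conj[OF eventually_unimodular_nodes_with_power_sums[OF F(1) B sums]
        eventually_ge_at_top[of "3 * (nat \<lceil>B\<rceil> + 10)"]]
  proof (rule eventually_mono)
    fix n
    assume "(\<exists>lam. inj_on lam {1..2 * n + 1} \<and> (\<forall>k\<in>{1..2 * n + 1}. norm (lam k) = 1)
        \<and> (\<forall>i<n. (\<Sum>k\<in>{1..2 * n + 1}. lam k ^ Suc i) = f i / h i)) \<and> 3 * (nat \<lceil>B\<rceil> + 10) \<le> n"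
    then show "?good n"
      using norm_HN_minus_pser_le_majorant[OF hcoef hanalytic norm_power_series_coeff_le[OF sums B]]
      by blast
  qed
  then show ?thesis
    unfolding eventually_sequentially .
qed

end
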